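(* Let $\mathcal Z=\mathbb R^d$, let $\mathcal U$ be a space on which densities are taken, let $\mathcal X$ be an observation space, and let $p_{X,Z}$ be a joint density on $\mathcal X\times\mathcal Z$ with posterior $p_{Z|X}(\cdot\mid x)$. Let $q_W$ be a density on $\mathcal Z$. Consider a family of continuously-indexed flow (CIF) inference models indexed by $\phi\in\Phi$, each consisting of a conditional density $q^\phi_{U|W}(\cdot\mid w)$ on $\mathcal U$ for $w\in\mathcal Z$, a conditional density $r^\phi_{U|Z}(\cdot\mid z)$ on $\mathcal U$ for $z\in\mathcal Z$, and a map $G_\phi:\mathcal Z\times\mathcal U\to\mathcal Z$ such that $G_\phi(\cdot;u)$ is a differentiable bijection for every $u\in\mathcal U$. Let $q^\phi_Z$ denote the distribution of $Z=G_\phi(W;U)$ where $W\sim q_W$ and $U\mid W\sim q^\phi_{U|W}(\cdot\mid W)$, and define, for $x\in\mathcal X$, $$\mathcal L_2^\phi(x)=\mathbb E_{w\sim q_W,\,u\sim q^\phi_{U|W}(\cdot\mid w)}\left[\log\frac{p_{X,Z}(x,G_\phi(w;u))\cdot r^\phi_{U|Z}(u\mid G_\phi(w;u))}{q_W(w)\cdot q^\phi_{U|W}(u\mid w)\cdot|\det \mathrm D_wG_\phi(w;u)|^{-1}}\right].$$ Suppose there exists $\psi\in\Phi$ such that for some bijection $g:\mathcal Z\to\mathcal Z$ we have $G_\psi(\cdot;u)=g(\cdot)$ for all $u\in\mathcal U$, and for some density $\rho$ on $\mathcal U$ we have $q^\psi_{U|W}(\cdot\mid w)=r^\psi_{U|Z}(\cdot\mid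 z)=\rho(\cdot)$ for all $w,z\in\mathcal Z$. Then for any $\phi\in\Phi$ and any $x\in\mathcal X$ with $\mathcal L_2^\phi(x)\ge\mathcal L_2^\psi(x)$, $$\mathrm{KL}\big(q^\phi_Z\,\|\,p_{Z|X}(\cdot\mid x)\big)\le \mathrm{KL}\big(g_\# q_W\,\|\,p_{Z|X}(\cdot\mid x)\big),$$ where $g_\# q_W$ is the pushforward of $q_W$ under $g$.
   Context: $\mathrm{KL}(\cdot\|\cdot)$ denotes the Kullback–Leibler divergence; $\mathrm D_wG_\phi(w;u)$ is the Jacobian of $G_\phi$ with respect to its first argument. All densities, expectations and logarithms are assumed well defined and finite, and $p_X(x)=\int p_{X,Z}(x,z)\,\mathrm dz$ is the marginal with $p_{Z|X}(z\mid x)=p_{X,Z}(x,z)/p_X(x)$. *)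

theory Defs
  imports "HOL-Analysis.Analysis" "HOL-Probability.Probability"
begin

definition is_density :: "'a measure \<Rightarrow> ('a \<Rightarrow> real) \<Rightarrow> bool" where
  "is_density M f \<longleftrightarrow> f \<in> borel_measurable M \<and> (\<forall>x\<in>space M. 0 \<le> f x)
      \<and> (\<integral>\<^sup>+ x. ennreal (f x) \<partial>M) = 1"

text \<open>Kullback-Leibler divergence KL(N || M) (natural logarithm).\<close>
definition KL :: "'a measure \<Rightarrow> 'a measure \<Rightarrow> real" where
  "KL N M = KL_divergence (exp 1) M N"

definition marginal :: "('x \<Rightarrow> 'z::euclidean_space \<Rightarrow> real) \<Rightarrow> 'x \<Rightarrow> real" where
  "marginal p x = (\<integral> z. p x z \<partial>lborel)"

definition posterior :: "('x \<Rightarrow> 'z::euclidean_space \<Rightarrow> real) \<Rightarrow> 'x \<Rightarrow> 'z \<Rightarrow> real" where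
  "posterior p x z = p x z / marginal p x"

definition posterior_measure :: "('x \<Rightarrow> 'z::euclidean_space \<Rightarrow> real) \<Rightarrow> 'x \<Rightarrow> 'z measure" where
  "posterior_measure p x = density lborel (\<lambda>z. ennreal (posterior p x z))"

text \<open>Joint law of (W,U): W ~ qW (Lebesgue density), U | W=w ~ qUW w (density w.r.t. muU).\<close>
definition joint_WU :: "('z::euclidean_space \<Rightarrow> real) \<Rightarrow> 'u measure \<Rightarrow> ('z \<Rightarrow> 'u \<Rightarrow> real)
    \<Rightarrow> ('z \<times> 'u) measure" where
  "joint_WU qW muU qUW = density (lborel \<Otimes>\<^sub>M muU) (\<lambda>(w,u). ennreal (qW w * qUW w u))"

definition qZ :: "('z::euclidean_space \<Rightarrow> real) \<Rightarrow> 'u measure \<Rightarrow> ('z \<Rightarrow> 'u \<Rightarrow> real)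
    \<Rightarrow> ('z \<Rightarrow> 'u \<Rightarrow> 'z) \<Rightarrow> 'z measure" where
  "qZ qW muU qUW G = distr (joint_WU qW muU qUW) lborel (\<lambda>(w,u). G w u)"

definition jacdet :: "(real^'n \<Rightarrow> 'u \<Rightarrow> real^'n) \<Rightarrow> real^'n \<Rightarrow> 'u \<Rightarrow> real" where
  "jacdet G w u = det (matrix (frechet_derivative (\<lambda>v. G v u) (at w)))"

definition L2_integrand :: "('x \<Rightarrow> real^'n \<Rightarrow> real) \<Rightarrow> (real^'n \<Rightarrow> real)
    \<Rightarrow> (real^'n \<Rightarrow> 'u \<Rightarrow> real) \<Rightarrow> (real^'n \<Rightarrow> 'u \<Rightarrow> real) \<Rightarrow> (real^'n \<Rightarrow> 'u \<Rightarrow> real^'n)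
    \<Rightarrow> 'x \<Rightarrow> (real^'n) \<times> 'u \<Rightarrow> real" where
  "L2_integrand p qW qUW rUZ G x = (\<lambda>(w,u).
      (p x (G w u) * rUZ (G w u) u) / (qW w * qUW w u * inverse \<bar>jacdet G w u\<bar>))"

definition L2 :: "('x \<Rightarrow> real^'n \<Rightarrow> real) \<Rightarrow> (real^'n \<Rightarrow> real) \<Rightarrow> 'u measure
    \<Rightarrow> (real^'n \<Rightarrow> 'u \<Rightarrow> real) \<Rightarrow> (real^'n \<Rightarrow> 'u \<Rightarrow> real) \<Rightarrow> (real^'n \<Rightarrow> 'u \<Rightarrow> real^'n)
    \<Rightarrow> 'x \<Rightarrow> real" where
  "L2 p qW muU qUW rUZ G x =
     (\<integral> wu. ln (L2_integrand p qW qUW rUZ G x wu) \<partial>(joint_WU qW muU qUW))"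

end

theory Submission
  imports Defs
begin

text \<open>
  Write P for the posterior, m = p_X(x), h = dQ/dP for the law Q of the model, and L for the
  integrand of L_2. Under the joint law of (W, U), the function f = ln h(G(W;U)) + ln L - ln m
  has E[exp f] = E[h(G(W;U)) L / m] \<le> \<integral> h dP = 1: change variables z = G(w;u) for fixed u, and
  integrate u out against r(. | z). Since exp t \<ge> 1 + t, this forces E f \<le> 0, i.e.
  KL(Q || P) \<le> ln m - L_2 for every flow. For the flow psi the bound is an equality: the
  pushforward of q_W under g has Lebesgue density p(x, .) h / m, so
  q_W = \<bar>det Dg\<bar> p(x, g .) h(g .) / m almost everywhere and L = m / h(g(W)) almost surely.
  Hence KL(Q_phi || P) \<le> ln m - L_2(phi) \<le> ln m - L_2(psi) = KL(g_# q_W || P).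
\<close>

section \<open>Change of variables with an arbitrary coordinate type\<close>

text \<open>
  The change-of-variables theorems of HOL-Analysis are stated for real^'n with 'n of class
  wellorder. fin_ord is a well-ordered type of the same size as a finite type 'a; permuting
  coordinates along a bijection between the two transfers those theorems to every finite 'a.
\<close>

typedef ('a::finite) fin_ord = "{..<CARD('a)}"
  morphisms fin_ord_rep fin_ord_abs
  by (rule exI[of _ 0]) simp

instantiation fin_ord :: (finite) linorder
begin
definition less_eq_fin_ord :: "'a fin_ord \<Rightarrow> 'a fin_ord \<Rightarrow> bool"
  where "less_eq_fin_ord a b \<longleftrightarrow> fin_ord_rep a \<le> fin_ord_rep b"
definition less_fin_ord :: "'a fin_ord \<Rightarrow> 'a fin_ord \<Rightarrow> bool"
  where "less_fin_ord a b \<longleftrightarrow> fin_ord_rep a < fin_ord_rep b"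
instance by standard (auto simp: less_eq_fin_ord_def less_fin_ord_def fin_ord_rep_inject)
end

instance fin_ord :: (finite) finite
proof
  have "(UNIV :: 'a fin_ord set) = fin_ord_abs ` {..<CARD('a)}"
    using type_definition.Abs_image[OF type_definition_fin_ord[where 'a='a]] by simp
  then show "finite (UNIV :: 'a fin_ord set)" by (metis finite_imageI finite_lessThan)
qed

instance fin_ord :: (finite) wellorder
proof
  fix P :: "'a fin_ord \<Rightarrow> bool" and a
  assume step: "\<And>x. (\<And>y. y < x \<Longrightarrow> P y) \<Longrightarrow> P x"
  have "P x" if "fin_ord_rep x = n" for n x
    using that by (induction n arbitrary: x rule: less_induct) (metis step less_fin_ord_def)
  then show "P a" by blast
qed

lemma ex_bij_fin_ord: "\<exists>s :: 'a::finite fin_ord \<Rightarrow> 'a. bij s"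
proof -
  have "CARD('a fin_ord) = CARD('a)"
    using type_definition.card[OF type_definition_fin_ord] by simp
  then show ?thesis
    using finite_same_card_bij[of "UNIV :: 'a fin_ord set" "UNIV :: 'a set"] by auto
qed

lemma det_reindex:
  fixes A :: "'a::comm_ring_1^'d::finite^'d" and s :: "'n::finite \<Rightarrow> 'd"
  assumes s: "bij s"
  shows "det ((\<chi> i j. A $ s i $ s j) :: 'a^'n^'n) = det A"
proof -
  let ?c = "\<lambda>p. s \<circ> p \<circ> inv s"
  have inj: "inj s" and surj: "surj s" using s by (simp_all add: bij_is_inj bij_is_surj)
  have sign_c: "sign (?c p) = sign p" if "p permutes UNIV" for p
  proof -
    have "map_permutation UNIV s p = ?c p"
      using surj by (simp add: map_permutation_def restrict_id_def fun_eq_iff)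
    then show ?thesis using sign_map_permutation[of s UNIV p] inj that by simp
  qed
  show ?thesis unfolding det_def
  proof (rule sum.reindex_bij_witness[where j = ?c and i = "\<lambda>q. inv s \<circ> q \<circ> s"])
    fix p :: "'n \<Rightarrow> 'n" assume p: "p \<in> {p. p permutes UNIV}"
    show "inv s \<circ> ?c p \<circ> s = p" by (simp add: fun_eq_iff inv_f_f[OF inj])
    have "bij p" using p permutes_bij by blast
    then have "bij (?c p)" by (intro bij_comp s bij_imp_bij_inv)
    then show "?c p \<in> {p. p permutes UNIV}" using bij_imp_permutes[of "?c p" UNIV] by simp
    have "(\<Prod>k\<in>UNIV. A $ k $ ?c p k) = (\<Prod>i\<in>UNIV. A $ s i $ ?c p (s i))"
      using prod.reindex[OF inj, of "\<lambda>k. A $ k $ ?c p k"] surj by (simp add: o_def)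
    also have "\<dots> = (\<Prod>i\<in>UNIV. A $ s i $ s (p i))"
      by (simp add: inv_f_f[OF inj])
    finally show "of_int (sign (?c p)) * (\<Prod>k\<in>UNIV. A $ k $ ?c p k) =
        of_int (sign p) * (\<Prod>i\<in>UNIV. (\<chi> i j. A $ s i $ s j) $ i $ p i)"
      using sign_c p by simp
  next
    fix q :: "'d \<Rightarrow> 'd" assume q: "q \<in> {p. p permutes UNIV}"
    show "?c (inv s \<circ> q \<circ> s) = q" by (simp add: fun_eq_iff surj_f_inv_f[OF surj])
    have "bij (inv s \<circ> q \<circ> s)"
      using q s permutes_bij[of q UNIV] by (simp add: bij_comp bij_imp_bij_inv)
    then show "inv s \<circ> q \<circ> s \<in> {p. p permutes UNIV}"
      using bij_imp_permutes[of "inv s \<circ> q \<circ> s" UNIV] by simp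
  qed
qed

definition permute_coords :: "('n \<Rightarrow> 'd) \<Rightarrow> 'a^'d \<Rightarrow> 'a^'n" where
  "permute_coords s x = (\<chi> i. x $ s i)"

lemma permute_coords_inv:
  assumes "bij s"
  shows "permute_coords (inv s) (permute_coords s x) = x"
    and "permute_coords s (permute_coords (inv s) y) = y"
  using assms by (simp_all add: permute_coords_def vec_eq_iff bij_is_surj surj_f_inv_f bij_is_inj)

lemma bounded_linear_permute_coords: "bounded_linear (permute_coords s :: real^'d \<Rightarrow> real^'n)"
  unfolding linear_conv_bounded_linear[symmetric]
  by (auto simp: linear_iff permute_coords_def vec_eq_iff)

lemma borel_measurable_permute_coords [measurable]:
  "(permute_coords s :: real^'d \<Rightarrow> real^'n) \<in> borel_measurable borel"
  by (intro borel_measurable_continuous_onI linear_continuous_on bounded_linear_permute_coords)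

lemma permute_coords_axis:
  assumes "bij s"
  shows "permute_coords (inv s) (axis j 1) = (axis (s j) 1 :: real^'d)"
  using assms by (simp add: permute_coords_def axis_def vec_eq_iff) (metis bij_inv_eq_iff)

lemma prod_Basis_vec: "(\<Prod>b\<in>(Basis :: (real^'n) set). f b) = (\<Prod>i\<in>UNIV. f (axis i 1))"
proof -
  have "(Basis :: (real^'n) set) = (\<lambda>i. axis i 1) ` UNIV"
    by (auto simp: Basis_vec_def)
  moreover have "inj (\<lambda>i. axis i (1::real) :: real^'n)"
    by (auto simp: inj_def axis_eq_axis)
  ultimately show ?thesis
    using prod.reindex[of "\<lambda>i. axis i (1::real) :: real^'n" UNIV f] by (simp add: o_def)
qed

lemma lborel_distr_permute_coords:
  fixes s :: "'n::finite \<Rightarrow> 'd::finite"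
  assumes s: "bij s"
  shows "distr lborel borel (permute_coords s :: real^'d \<Rightarrow> real^'n) = lborel"
proof (rule lborel_eqI[symmetric])
  fix l u :: "real^'n"
  assume le_Basis: "\<And>b. b \<in> Basis \<Longrightarrow> l \<bullet> b \<le> u \<bullet> b"
  have le: "l $ i \<le> u $ i" for i
    using le_Basis[of "axis i 1"] by (simp add: cart_eq_inner_axis)
  let ?l = "permute_coords (inv s) l" and ?u = "permute_coords (inv s) u"
  have "x \<in> permute_coords s -` box l u \<longleftrightarrow> x \<in> box ?l ?u" for x
  proof -
    have "x \<in> permute_coords s -` box l u \<longleftrightarrow> (\<forall>i. l $ i < x $ s i \<and> x $ s i < u $ i)"
      by (simp add: mem_box_cart permute_coords_def)
    also have "\<dots> \<longleftrightarrow> (\<forall>j. l $ inv s j < x $ j \<and> x $ j < u $ inv s j)"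
      using s by (metis bij_inv_eq_iff)
    finally show ?thesis
      by (simp add: mem_box_cart permute_coords_def)
  qed
  then have preimage: "permute_coords s -` box l u = box ?l ?u" by blast
  have box_le: "\<forall>b\<in>Basis. ?l \<bullet> b \<le> ?u \<bullet> b"
    using le by (auto simp: Basis_vec_def inner_axis permute_coords_def)
  have "emeasure (distr lborel borel (permute_coords s)) (box l u) = emeasure lborel (box ?l ?u)"
    by (simp add: emeasure_distr preimage)
  also have "\<dots> = (\<Prod>j\<in>UNIV. ennreal (u $ inv s j - l $ inv s j))"
    using le box_le by (simp add: emeasure_lborel_box_eq prod_Basis_vec permute_coords_def inner_axis
        cart_eq_inner_axis[symmetric] prod_ennreal[symmetric] prod_nonneg)
  also have "\<dots> = (\<Prod>i\<in>UNIV. ennreal (u $ i - l $ i))"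
    using prod.reindex[OF bij_is_inj[OF bij_imp_bij_inv[OF s]], of "\<lambda>i. ennreal (u $ i - l $ i)"]
      bij_is_surj[OF bij_imp_bij_inv[OF s]] by (simp add: o_def)
  also have "\<dots> = ennreal (\<Prod>b\<in>Basis. (u - l) \<bullet> b)"
    using le by (simp add: prod_Basis_vec inner_axis cart_eq_inner_axis[symmetric] prod_ennreal[symmetric])
  finally show "emeasure (distr lborel borel (permute_coords s)) (box l u)
      = ennreal (\<Prod>b\<in>Basis. (u - l) \<bullet> b)" .
qed simp

lemma continuous_on_has_derivative:
  assumes "\<And>x. (g has_derivative g' x) (at x)"
  shows "continuous_on UNIV g"
  using assms by (intro has_derivative_continuous_on) auto

lemma borel_measurable_has_derivative:
  assumes "\<And>x. (g has_derivative g' x) (at x)"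
  shows "g \<in> borel_measurable borel"
  using continuous_on_has_derivative[OF assms] by (rule borel_measurable_continuous_onI)

lemma open_range_inj_has_derivative:
  fixes g :: "'a::euclidean_space \<Rightarrow> 'a"
  assumes "inj g" and "\<And>x. (g has_derivative g' x) (at x)"
  shows "open (range g)"
  using invariance_of_domain[OF continuous_on_has_derivative[OF assms(2)] open_UNIV] assms(1) by simp

lemma difference_quotient_component_LIMSEQ:
  fixes g :: "'a::real_normed_vector \<Rightarrow> real^'d"
  assumes der: "(g has_derivative g') (at x)"
  shows "(\<lambda>n. (g (x + inverse (real (Suc n)) *\<^sub>R v) $ i - g x $ i) / inverse (real (Suc n)))
    \<longlonglongrightarrow> g' v $ i"
proof -
  let ?phi = "\<lambda>t. g (x + t *\<^sub>R v) $ i"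
  have line: "((\<lambda>t::real. x + t *\<^sub>R v) has_derivative (\<lambda>t. t *\<^sub>R v)) (at 0)"
    by (auto intro!: derivative_eq_intros)
  have "((\<lambda>t. g (x + t *\<^sub>R v)) has_derivative (\<lambda>t. g' (t *\<^sub>R v))) (at 0)"
    using has_derivative_compose[OF line, of g g'] der by simp
  from has_derivative_compose[OF this bounded_linear_imp_has_derivative[OF bounded_linear_vec_nth[of i]]]
  have "(?phi has_derivative (\<lambda>t. g' (t *\<^sub>R v) $ i)) (at 0)"
    by simp
  moreover have "(\<lambda>t. g' (t *\<^sub>R v) $ i) = (\<lambda>t. g' v $ i * t)"
    using has_derivative_linear[OF der] by (simp add: fun_eq_iff linear_scale mult.commute)
  ultimately have "(?phi has_field_derivative g' v $ i) (at 0)"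
    by (simp add: has_field_derivative_def)
  then have quotient_lim: "((\<lambda>t. (?phi t - ?phi 0) / (t - 0)) \<longlongrightarrow> g' v $ i) (at 0)"
    by (rule has_field_derivative_iff[THEN iffD1])
  have "filterlim (\<lambda>n. inverse (real (Suc n))) (at 0) sequentially"
    using LIMSEQ_inverse_real_of_nat by (auto simp: filterlim_at)
  from filterlim_compose[OF quotient_lim this] show ?thesis
    by simp
qed

lemma borel_measurable_partial_derivative_component:
  fixes G :: "'a::euclidean_space \<Rightarrow> 'b \<Rightarrow> real^'d"
  assumes G [measurable]: "(\<lambda>(w,u). G w u) \<in> borel_measurable (lborel \<Otimes>\<^sub>M M)"
    and der: "\<And>w u. u \<in> space M \<Longrightarrow> ((\<lambda>v. G v u) has_derivative G' w u) (at w)"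
  shows "(\<lambda>(w,u). G' w u v $ i) \<in> borel_measurable (lborel \<Otimes>\<^sub>M M)"
proof (rule borel_measurable_LIMSEQ_real)
  let ?t = "\<lambda>n. inverse (real (Suc n))"
  have [measurable]: "(\<lambda>y::real^'d. y $ i) \<in> borel_measurable borel"
    by (intro borel_measurable_continuous_onI linear_continuous_on bounded_linear_vec_nth)
  have "(\<lambda>(w,u). G (w + c) u) \<in> borel_measurable (lborel \<Otimes>\<^sub>M M)" for c
    using measurable_compose[OF _ G, of "\<lambda>(w,u). (w + c, u)"] by (simp add: case_prod_unfold)
  then show "(\<lambda>(w,u). (G (w + ?t n *\<^sub>R v) u $ i - G w u $ i) / ?t n) \<in> borel_measurable (lborel \<Otimes>\<^sub>M M)"
    for n by measurable
  show "(\<lambda>n. (\<lambda>(w,u). (G (w + ?t n *\<^sub>R v) u $ i - G w u $ i) / ?t n) wu)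
      \<longlonglongrightarrow> (\<lambda>(w,u). G' w u v $ i) wu" if "wu \<in> space (lborel \<Otimes>\<^sub>M M)" for wu
    using that difference_quotient_component_LIMSEQ[OF der] by (auto simp: space_pair_measure)
qed

lemma borel_measurable_det_partial_derivative:
  fixes G :: "real^'d \<Rightarrow> 'b \<Rightarrow> real^'d"
  assumes "(\<lambda>(w,u). G w u) \<in> borel_measurable (lborel \<Otimes>\<^sub>M M)"
    and "\<And>w u. u \<in> space M \<Longrightarrow> ((\<lambda>v. G v u) has_derivative G' w u) (at w)"
  shows "(\<lambda>(w,u). det (matrix (G' w u))) \<in> borel_measurable (lborel \<Otimes>\<^sub>M M)"
proof -
  have [measurable]: "(\<lambda>(w,u). G' w u (axis j 1) $ i) \<in> borel_measurable (lborel \<Otimes>\<^sub>M M)" for i j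
    using assms by (rule borel_measurable_partial_derivative_component)
  show ?thesis
    by (simp add: det_def matrix_def case_prod_unfold)
qed

lemma borel_measurable_det_derivative:
  fixes g :: "real^'d \<Rightarrow> real^'d"
  assumes der: "\<And>x. (g has_derivative g' x) (at x)"
  shows "(\<lambda>x. det (matrix (g' x))) \<in> borel_measurable borel"
proof -
  let ?M = "count_space (UNIV :: unit set)"
  note [measurable] = borel_measurable_has_derivative[OF der]
  have "(\<lambda>(w,u). g w) \<in> borel_measurable (lborel \<Otimes>\<^sub>M ?M)"
    by measurable
  from borel_measurable_det_partial_derivative[OF this, of "\<lambda>w u. g' w"] der
  have "(\<lambda>(w,u). det (matrix (g' w))) \<in> borel_measurable (lborel \<Otimes>\<^sub>M ?M)"
    by blast
  from measurable_compose[OF measurable_Pair2'[of "()" ?M lborel] this] show ?thesis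
    by simp
qed

lemma nn_integral_lborel_eq_if_has_integral_iff:
  fixes f g :: "'a::euclidean_space \<Rightarrow> real"
  assumes [measurable]: "f \<in> borel_measurable borel" "g \<in> borel_measurable borel"
    and nonneg: "\<And>x. 0 \<le> f x" "\<And>x. 0 \<le> g x"
    and has_integral_iff: "\<And>r. (f has_integral r) UNIV \<longleftrightarrow> (g has_integral r) UNIV"
  shows "(\<integral>\<^sup>+x. f x \<partial>lborel) = (\<integral>\<^sup>+x. g x \<partial>lborel)"
proof -
  have finite_f: "(\<integral>\<^sup>+x. g x \<partial>lborel) = ennreal r"
    if "(\<integral>\<^sup>+x. f x \<partial>lborel) = ennreal r" "0 \<le> r" for r
    using nn_integral_has_integral[of f r] nn_integral_has_integral_lebesgue[of UNIV g r]
      has_integral_iff that nonneg by simp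
  have finite_g: "(\<integral>\<^sup>+x. f x \<partial>lborel) = ennreal r"
    if "(\<integral>\<^sup>+x. g x \<partial>lborel) = ennreal r" "0 \<le> r" for r
    using nn_integral_has_integral[of g r] nn_integral_has_integral_lebesgue[of UNIV f r]
      has_integral_iff that nonneg by simp
  show ?thesis
  proof (cases "(\<integral>\<^sup>+x. f x \<partial>lborel)" rule: ennreal_cases)
    case top
    then show ?thesis
      using finite_g by (cases "(\<integral>\<^sup>+x. g x \<partial>lborel)" rule: ennreal_cases) auto
  qed (use finite_f in auto)
qed

lemma has_integral_change_of_variables_nonneg:
  fixes g :: "real^'n::{finite,wellorder} \<Rightarrow> real^'n::_" and f :: "real^'n::_ \<Rightarrow> real"
  assumes inj: "inj g" and der: "\<And>x. (g has_derivative g' x) (at x)"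
    and nonneg: "\<And>y. 0 \<le> f y"
  shows "((\<lambda>x. \<bar>det (matrix (g' x))\<bar> * f (g x)) has_integral r) UNIV \<longleftrightarrow> (f has_integral r) (range g)"
proof -
  have "(\<lambda>x. \<bar>det (matrix (g' x))\<bar> * f (g x)) absolutely_integrable_on UNIV
      \<and> integral UNIV (\<lambda>x. \<bar>det (matrix (g' x))\<bar> * f (g x)) = r
    \<longleftrightarrow> f absolutely_integrable_on range g \<and> integral (range g) f = r"
    using has_absolute_integral_change_of_variables[of UNIV g g' "\<lambda>y. vec (f y) :: real^1" "vec r"]
      inj der
    by (simp add: absolutely_integrable_on_1_iff integral_on_1_eq vec_eq_iff)
  then show ?thesis
    using nonneg by (simp add: absolutely_integrable_on_iff_nonneg has_integral_iff)
qed

lemma nn_integral_change_of_variables_wellorder: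
  fixes g :: "real^'n::{finite,wellorder} \<Rightarrow> real^'n::_" and f :: "real^'n::_ \<Rightarrow> real"
  assumes inj: "inj g" and der: "\<And>x. (g has_derivative g' x) (at x)"
    and f_meas: "f \<in> borel_measurable borel" and nonneg: "\<And>y. 0 \<le> f y"
  shows "(\<integral>\<^sup>+x. ennreal (\<bar>det (matrix (g' x))\<bar> * f (g x)) \<partial>lborel)
       = (\<integral>\<^sup>+y. ennreal (f y * indicator (range g) y) \<partial>lborel)"
proof (rule nn_integral_lborel_eq_if_has_integral_iff)
  note [measurable] = f_meas borel_measurable_has_derivative[OF der] borel_measurable_det_derivative[OF der]
    borel_open[OF open_range_inj_has_derivative[OF inj der]]
  show "(\<lambda>x. \<bar>det (matrix (g' x))\<bar> * f (g x)) \<in> borel_measurable borel"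
    and "(\<lambda>y. f y * indicator (range g) y) \<in> borel_measurable borel"
    by measurable
  have restrict: "(\<lambda>y. f y * indicator (range g) y) = (\<lambda>y. if y \<in> range g then f y else 0)"
    by (auto simp: fun_eq_iff)
  show "((\<lambda>x. \<bar>det (matrix (g' x))\<bar> * f (g x)) has_integral r) UNIV
      \<longleftrightarrow> ((\<lambda>y. f y * indicator (range g) y) has_integral r) UNIV" for r
    unfolding restrict has_integral_restrict_UNIV
    by (rule has_integral_change_of_variables_nonneg[OF inj der nonneg])
  show "0 \<le> \<bar>det (matrix (g' x))\<bar> * f (g x)" "0 \<le> f x * indicator (range g) x" for x
    using nonneg by simp_all
qed

lemma nn_integral_lborel_permute_coords:
  fixes s :: "'n::finite \<Rightarrow> 'd::finite" and h :: "real^'n \<Rightarrow> ennreal"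
  assumes s: "bij s" and h: "h \<in> borel_measurable borel"
  shows "(\<integral>\<^sup>+x. h x \<partial>lborel) = (\<integral>\<^sup>+y. h (permute_coords s y) \<partial>lborel)"
proof -
  have "(\<integral>\<^sup>+x. h x \<partial>lborel) = (\<integral>\<^sup>+x. h x \<partial>distr lborel borel (permute_coords s))"
    by (simp add: lborel_distr_permute_coords[OF s])
  also have "\<dots> = (\<integral>\<^sup>+y. h (permute_coords s y) \<partial>lborel)"
    using h by (simp add: nn_integral_distr)
  finally show ?thesis .
qed

lemma conj_permute_coords:
  fixes g :: "real^'d::finite \<Rightarrow> real^'d" and s :: "'n::finite \<Rightarrow> 'd"
  assumes s: "bij s" and der: "\<And>x. (g has_derivative g' x) (at x)"
  defines "G \<equiv> permute_coords s \<circ> g \<circ> permute_coords (inv s)"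
  shows "(G has_derivative permute_coords s \<circ> g' (permute_coords (inv s) y) \<circ> permute_coords (inv s)) (at y)"
    and "det (matrix (permute_coords s \<circ> g' x \<circ> permute_coords (inv s))) = det (matrix (g' x))"
    and "inj g \<Longrightarrow> inj G"
    and "z \<in> range G \<longleftrightarrow> permute_coords (inv s) z \<in> range g"
proof -
  let ?e = "permute_coords s :: real^'d \<Rightarrow> real^'n" and ?e' = "permute_coords (inv s) :: real^'n \<Rightarrow> real^'d"
  have e_e': "?e (?e' y) = y" "?e' (?e x) = x" for x y
    by (simp_all add: permute_coords_inv[OF s])
  have "(?e' has_derivative ?e') (at y)" and "(?e has_derivative ?e) (at (g (?e' y)))"
    by (simp_all add: bounded_linear_imp_has_derivative bounded_linear_permute_coords)
  with der show "(G has_derivative ?e \<circ> g' (?e' y) \<circ> ?e') (at y)"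
    unfolding G_def by (auto intro: diff_chain_at)
  have "matrix (?e \<circ> g' x \<circ> ?e') = (\<chi> i j. matrix (g' x) $ s i $ s j)"
    using s by (simp add: matrix_def permute_coords_def[of s] vec_eq_iff permute_coords_axis)
  then show "det (matrix (?e \<circ> g' x \<circ> ?e')) = det (matrix (g' x))"
    using det_reindex[OF s] by simp
  show "inj G" if "inj g"
    using that unfolding G_def inj_def by (metis comp_apply e_e')
  show "z \<in> range G \<longleftrightarrow> ?e' z \<in> range g"
  proof
    assume "?e' z \<in> range g"
    then obtain x where "?e' z = g x" by auto
    then have "z = G (?e x)" by (metis G_def comp_apply e_e')
    then show "z \<in> range G" by simp
  qed (auto simp: G_def e_e')
qed

lemma nn_integral_change_of_variables:
  fixes g :: "real^'d::finite \<Rightarrow> real^'d" and f :: "real^'d \<Rightarrow> real"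
  assumes inj: "inj g" and der: "\<And>x. (g has_derivative g' x) (at x)"
    and f_meas [measurable]: "f \<in> borel_measurable borel" and nonneg: "\<And>y. 0 \<le> f y"
  shows "(\<integral>\<^sup>+x. ennreal (\<bar>det (matrix (g' x))\<bar> * f (g x)) \<partial>lborel)
       = (\<integral>\<^sup>+y. ennreal (f y * indicator (range g) y) \<partial>lborel)"
proof -
  obtain s :: "'d fin_ord \<Rightarrow> 'd" where s: "bij s" using ex_bij_fin_ord by blast
  let ?e = "permute_coords s" and ?e' = "permute_coords (inv s)"
  let ?G = "?e \<circ> g \<circ> ?e'" and ?G' = "\<lambda>y. ?e \<circ> g' (?e' y) \<circ> ?e'"
  note conj = conj_permute_coords[OF s der]
  note [measurable] = borel_measurable_has_derivative[OF der] borel_measurable_det_derivative[OF der]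
    borel_open[OF open_range_inj_has_derivative[OF inj der]]
  have pull_back: "(\<integral>\<^sup>+x. h x \<partial>lborel) = (\<integral>\<^sup>+y. h (?e' y) \<partial>lborel)"
    if "h \<in> borel_measurable borel" for h :: "real^'d \<Rightarrow> ennreal"
    by (rule nn_integral_lborel_permute_coords[OF bij_imp_bij_inv[OF s] that])
  have "(\<integral>\<^sup>+x. ennreal (\<bar>det (matrix (g' x))\<bar> * f (g x)) \<partial>lborel)
      = (\<integral>\<^sup>+y. ennreal (\<bar>det (matrix (?G' y))\<bar> * (f \<circ> ?e') (?G y)) \<partial>lborel)"
    by (subst pull_back) (simp_all add: conj(2) permute_coords_inv[OF s])
  also have "\<dots> = (\<integral>\<^sup>+z. ennreal ((f \<circ> ?e') z * indicator (range ?G) z) \<partial>lborel)"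
    using nonneg by (intro nn_integral_change_of_variables_wellorder conj(1) conj(3)[OF inj]) simp_all
  also have "\<dots> = (\<integral>\<^sup>+y. ennreal (f (?e' y) * indicator (range g) (?e' y)) \<partial>lborel)"
    by (simp only: indicator_def conj(4) comp_apply)
  also have "\<dots> = (\<integral>\<^sup>+y. ennreal (f y * indicator (range g) y) \<partial>lborel)"
    by (rule pull_back[symmetric]) measurable
  finally show ?thesis .
qed

lemma nn_integral_change_of_variables_le:
  fixes g :: "real^'d::finite \<Rightarrow> real^'d" and f :: "real^'d \<Rightarrow> real"
  assumes "inj g" and "\<And>x. (g has_derivative g' x) (at x)"
    and "f \<in> borel_measurable borel" and nonneg: "\<And>y. 0 \<le> f y"
  shows "(\<integral>\<^sup>+x. ennreal (\<bar>det (matrix (g' x))\<bar> * f (g x)) \<partial>lborel) \<le> (\<integral>\<^sup>+y. ennreal (f y) \<partial>lborel)"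
  unfolding nn_integral_change_of_variables[OF assms]
  using nonneg by (intro nn_integral_mono) (simp add: indicator_def)

lemma distr_density_change_of_variables:
  fixes g :: "real^'d::finite \<Rightarrow> real^'d" and k :: "real^'d \<Rightarrow> real"
  assumes inj: "inj g" and der: "\<And>x. (g has_derivative g' x) (at x)"
    and k_meas [measurable]: "k \<in> borel_measurable borel" and nonneg: "\<And>z. 0 \<le> k z"
  shows "distr (density lborel (\<lambda>w. ennreal (\<bar>det (matrix (g' w))\<bar> * k (g w)))) borel g
    = density lborel (\<lambda>z. ennreal (k z * indicator (range g) z))"
proof (rule measure_eqI)
  note [measurable] = borel_measurable_has_derivative[OF der] borel_measurable_det_derivative[OF der]
    borel_open[OF open_range_inj_has_derivative[OF inj der]]
  fix A assume "A \<in> sets (distr (density lborel (\<lambda>w. ennreal (\<bar>det (matrix (g' w))\<bar> * k (g w)))) borel g)"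
  then have [measurable]: "A \<in> sets borel" by simp
  have "emeasure (distr (density lborel (\<lambda>w. ennreal (\<bar>det (matrix (g' w))\<bar> * k (g w)))) borel g) A
      = emeasure (density lborel (\<lambda>w. ennreal (\<bar>det (matrix (g' w))\<bar> * k (g w)))) (g -` A)"
    by (simp add: emeasure_distr)
  also have "\<dots> = (\<integral>\<^sup>+w. ennreal (\<bar>det (matrix (g' w))\<bar> * k (g w)) * indicator (g -` A) w \<partial>lborel)"
    using measurable_sets[of g borel borel A] by (intro emeasure_density) auto
  also have "\<dots> = (\<integral>\<^sup>+w. ennreal (\<bar>det (matrix (g' w))\<bar> * (k (g w) * indicator A (g w))) \<partial>lborel)"
    by (intro nn_integral_cong) (simp split: split_indicator)
  also have "\<dots> = (\<integral>\<^sup>+z. ennreal (k z * indicator A z * indicator (range g) z) \<partial>lborel)"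
    using nonneg by (intro nn_integral_change_of_variables[OF inj der]) auto
  also have "\<dots> = emeasure (density lborel (\<lambda>z. ennreal (k z * indicator (range g) z))) A"
    by (subst emeasure_density) (auto intro!: nn_integral_cong split: split_indicator)
  finally show "emeasure (distr (density lborel (\<lambda>w. ennreal (\<bar>det (matrix (g' w))\<bar> * k (g w)))) borel g) A
      = emeasure (density lborel (\<lambda>z. ennreal (k z * indicator (range g) z))) A" .
qed simp

lemma distr_homeomorphism_eqD:
  fixes g :: "'a::euclidean_space \<Rightarrow> 'a"
  assumes "bij g" and cont: "continuous_on UNIV g"
    and sets: "sets M = sets borel" "sets N = sets borel"
    and eq: "distr M borel g = distr N borel g"
  shows "M = N"
proof -
  have "continuous_on UNIV (inv g)"
    using continuous_on_inverse_open[of UNIV g "inv g"] cont \<open>bij g\<close>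
    by (simp add: bij_is_inj bij_is_surj)
  then have inv_meas: "inv g \<in> borel_measurable borel"
    by (rule borel_measurable_continuous_onI)
  have g_meas: "g \<in> borel_measurable borel"
    using cont by (rule borel_measurable_continuous_onI)
  have inv_distr: "distr (distr K borel g) K (inv g) = K" if K: "sets K = sets borel" for K
  proof -
    have "distr (distr K borel g) K (inv g) = distr K K (inv g \<circ> g)"
      using g_meas inv_meas
      by (intro distr_distr) (simp_all add: measurable_cong_sets[OF K refl] measurable_cong_sets[OF refl K])
    also have "inv g \<circ> g = id"
      using \<open>bij g\<close> by (simp add: bij_is_inj)
    finally show ?thesis
      by (simp add: id_def)
  qed
  have "M = distr (distr M borel g) M (inv g)"
    using inv_distr[OF sets(1)] by simp
  also have "\<dots> = distr (distr N borel g) N (inv g)"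
    by (rule distr_cong[OF eq]) (simp_all add: sets)
  also have "\<dots> = N"
    using inv_distr[OF sets(2)] by simp
  finally show ?thesis .
qed

lemma AE_eq_Jacobian_mult_of_distr_density:
  fixes g :: "real^'d::finite \<Rightarrow> real^'d" and f k :: "real^'d \<Rightarrow> real"
  assumes "bij g" and der: "\<And>x. (g has_derivative g' x) (at x)"
    and f_meas [measurable]: "f \<in> borel_measurable borel" and f_nonneg: "\<And>w. 0 \<le> f w"
    and k_meas [measurable]: "k \<in> borel_measurable borel" and k_nonneg: "\<And>z. 0 \<le> k z"
    and push: "distr (density lborel f) borel g = density lborel k"
  shows "AE w in lborel. f w = \<bar>det (matrix (g' w))\<bar> * k (g w)"
proof -
  note [measurable] = borel_measurable_has_derivative[OF der] borel_measurable_det_derivative[OF der]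
  have "distr (density lborel (\<lambda>w. ennreal (\<bar>det (matrix (g' w))\<bar> * k (g w)))) borel g
      = density lborel (\<lambda>z. ennreal (k z * indicator (range g) z))"
    by (rule distr_density_change_of_variables[OF bij_is_inj[OF \<open>bij g\<close>] der k_meas k_nonneg])
  also have "\<dots> = density lborel k"
    using bij_is_surj[OF \<open>bij g\<close>] by simp
  finally have "distr (density lborel f) borel g
      = distr (density lborel (\<lambda>w. ennreal (\<bar>det (matrix (g' w))\<bar> * k (g w)))) borel g"
    using push by simp
  then have "density lborel f = density lborel (\<lambda>w. ennreal (\<bar>det (matrix (g' w))\<bar> * k (g w)))"
    by (rule distr_homeomorphism_eqD[OF \<open>bij g\<close> continuous_on_has_derivative[OF der], rotated 2]) simp_all
  then have "AE w in lborel. ennreal (f w) = ennreal (\<bar>det (matrix (g' w))\<bar> * k (g w))"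
    by (intro sigma_finite_measure.density_unique[OF sigma_finite_lborel]) auto
  then show ?thesis
    by eventually_elim (simp add: f_nonneg k_nonneg)
qed

section \<open>Kullback-Leibler divergence and Radon-Nikodym derivatives\<close>

lemma ennreal_mult_enn2real:
  assumes "0 \<le> a" and "0 < a \<longrightarrow> x \<noteq> \<infinity>"
  shows "ennreal a * x = ennreal (a * enn2real x)"
proof (cases "a = 0")
  case False
  with assms have "x < top" by (simp add: top.not_eq_extremum)
  with \<open>0 \<le> a\<close> show ?thesis
    by (simp only: ennreal_mult[OF _ enn2real_nonneg] ennreal_enn2real)
qed (simp only: mult_zero_left ennreal_0)

lemma entropy_density_exp_1: "entropy_density (exp 1) M N = (\<lambda>x. ln (enn2real (RN_deriv M N x)))"
  by (simp add: entropy_density_def log_def fun_eq_iff)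

lemma KL_eq_integral_ln_RN_deriv: "KL N M = (\<integral>x. ln (enn2real (RN_deriv M N x)) \<partial>N)"
  by (simp add: KL_def KL_divergence_def entropy_density_exp_1)

lemma sets_posterior_measure: "sets (posterior_measure p x) = sets borel"
  by (simp add: posterior_measure_def)

lemma sigma_finite_posterior_measure:
  assumes "p x \<in> borel_measurable lborel"
  shows "sigma_finite_measure (posterior_measure p x)"
  unfolding posterior_measure_def posterior_def using assms
  by (subst sigma_finite_measure.sigma_finite_iff_density_finite[OF sigma_finite_lborel]) auto

lemma borel_measurable_RN_deriv_borel:
  assumes "sets P = sets borel"
  shows "RN_deriv P Q \<in> borel_measurable borel"
  using borel_measurable_RN_deriv[of P Q] by (simp add: measurable_cong_sets[OF assms refl])

lemma KL_distr_eq_integral: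
  assumes f: "f \<in> measurable M lborel" and P: "sets P = sets borel"
  defines "h \<equiv> RN_deriv P (distr M lborel f)"
  shows "KL (distr M lborel f) P = (\<integral>x. ln (enn2real (h (f x))) \<partial>M)"
    and "integrable (distr M lborel f) (entropy_density (exp 1) P (distr M lborel f))
      \<longleftrightarrow> integrable M (\<lambda>x. ln (enn2real (h (f x))))"
proof -
  have [measurable]: "h \<in> borel_measurable borel"
    unfolding h_def using P by (rule borel_measurable_RN_deriv_borel)
  show "KL (distr M lborel f) P = (\<integral>x. ln (enn2real (h (f x))) \<partial>M)"
    unfolding KL_eq_integral_ln_RN_deriv h_def[symmetric] by (rule integral_distr[OF f]) measurable
  show "integrable (distr M lborel f) (entropy_density (exp 1) P (distr M lborel f))
      \<longleftrightarrow> integrable M (\<lambda>x. ln (enn2real (h (f x))))"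
    unfolding entropy_density_exp_1 h_def[symmetric] by (rule integrable_distr_eq[OF f]) measurable
qed

lemma (in prob_space) integral_nonpos_if_nn_integral_exp_le_1:
  assumes f: "integrable M f" and exp_f: "(\<integral>\<^sup>+x. ennreal (exp (f x)) \<partial>M) \<le> 1"
  shows "(\<integral>x. f x \<partial>M) \<le> 0"
proof -
  have exp_int: "integrable M (\<lambda>x. exp (f x))"
    using f exp_f by (intro integrableI_bounded) (auto simp: top.not_eq_extremum le_less_trans)
  have "f x \<le> exp (f x) - 1" for x
    using exp_ge_add_one_self[of "f x"] by linarith
  then have "(\<integral>x. f x \<partial>M) \<le> (\<integral>x. exp (f x) - 1 \<partial>M)"
    using f exp_int by (intro integral_mono) auto
  also have "\<dots> = (\<integral>x. exp (f x) \<partial>M) - 1"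
    using exp_int by (simp add: prob_space)
  also have "(\<integral>x. exp (f x) \<partial>M) \<le> 1"
    using exp_f exp_int by (simp add: nn_integral_eq_integral ennreal_le_1[symmetric] del: ennreal_le_1)
  finally show ?thesis by simp
qed

lemma posterior_RN_deriv:
  assumes p_meas: "p x \<in> borel_measurable lborel" and p_nonneg: "\<forall>z. 0 \<le> p x z"
    and p_marg_pos: "marginal p x > 0"
    and Q: "prob_space Q" "sets Q = sets borel"
    and ac: "absolutely_continuous (posterior_measure p x) Q"
  defines "h \<equiv> RN_deriv (posterior_measure p x) Q"
  shows "h \<in> borel_measurable borel"
    and "density lborel (\<lambda>z. ennreal (p x z / marginal p x * enn2real (h z))) = Q"
    and "AE z in Q. 0 < h z \<and> h z < \<infinity>"
    and "(\<integral>\<^sup>+z. ennreal (p x z / marginal p x * enn2real (h z)) \<partial>lborel) = 1"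
proof -
  let ?P = "posterior_measure p x" and ?post = "\<lambda>z. p x z / marginal p x"
  have [measurable]: "p x \<in> borel_measurable borel" using p_meas by simp
  have P_eq: "?P = density lborel ?post"
    by (simp add: posterior_measure_def posterior_def)
  note sets_P = sets_posterior_measure[of p x]
  note sigma_finite_P = sigma_finite_posterior_measure[of p x, OF p_meas]
  show h_meas [measurable]: "h \<in> borel_measurable borel"
    unfolding h_def using sets_P by (rule borel_measurable_RN_deriv_borel)
  have "density ?P h = Q"
    unfolding h_def using sigma_finite_P ac Q(2) sets_P
    by (intro sigma_finite_measure.density_RN_deriv) auto
  have "AE z in ?P. h z \<noteq> \<infinity>"
    using sigma_finite_measure.RN_deriv_finite[OF sigma_finite_P prob_space_imp_sigma_finite[OF Q(1)] ac]
      Q(2) sets_P by (simp add: h_def)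
  then have "AE z in lborel. 0 < ?post z \<longrightarrow> h z \<noteq> \<infinity>"
    unfolding P_eq by (subst (asm) AE_density) auto
  then have "AE z in lborel. ennreal (?post z) * h z = ennreal (?post z * enn2real (h z))"
    by (elim eventually_mono) (rule ennreal_mult_enn2real, simp_all add: p_nonneg p_marg_pos[THEN less_imp_le])
  then have "density ?P h = density lborel (\<lambda>z. ennreal (?post z * enn2real (h z)))"
    unfolding P_eq by (subst density_density_eq) (auto intro!: density_cong)
  with \<open>density ?P h = Q\<close> show density_eq: "density lborel (\<lambda>z. ennreal (?post z * enn2real (h z))) = Q"
    by simp
  have "(\<integral>\<^sup>+z. ennreal (?post z * enn2real (h z)) \<partial>lborel) = emeasure Q (space Q)"
    unfolding density_eq[symmetric] by (subst emeasure_density) auto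
  then show "(\<integral>\<^sup>+z. ennreal (?post z * enn2real (h z)) \<partial>lborel) = 1"
    by (simp add: prob_space.emeasure_space_1[OF Q(1)])
  have "AE z in Q. h z \<noteq> \<infinity>"
    using \<open>AE z in ?P. h z \<noteq> \<infinity>\<close> absolutely_continuous_AE[of Q ?P] ac Q(2) sets_P by simp
  moreover have "AE z in Q. 0 < h z"
    unfolding \<open>density ?P h = Q\<close>[symmetric] by (subst AE_density) (auto simp: measurable_cong_sets[OF sets_P refl])
  ultimately show "AE z in Q. 0 < h z \<and> h z < \<infinity>"
    by eventually_elim (auto simp: top.not_eq_extremum)
qed

section \<open>The joint law of W and U\<close>

lemma sets_joint_WU [measurable_cong]: "sets (joint_WU qW muU q) = sets (lborel \<Otimes>\<^sub>M muU)"
  by (simp add: joint_WU_def)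

lemma distr_fst_joint_WU:
  assumes muU: "sigma_finite_measure muU" and qW: "is_density lborel qW"
    and q_meas: "(\<lambda>(w,u). q w u) \<in> borel_measurable (lborel \<Otimes>\<^sub>M muU)"
    and q: "\<forall>w. is_density muU (q w)"
  shows "distr (joint_WU qW muU q) lborel fst = density lborel qW"
proof (rule measure_eqI)
  interpret U: sigma_finite_measure muU by fact
  have [measurable]: "qW \<in> borel_measurable lborel" using qW by (simp add: is_density_def)
  note [measurable] = q_meas
  fix A assume "A \<in> sets (distr (joint_WU qW muU q) lborel fst)"
  then have [measurable]: "A \<in> sets borel" by simp
  have "fst -` A \<inter> space (joint_WU qW muU q) = A \<times> space muU"
    by (auto simp: joint_WU_def space_pair_measure)
  then have "emeasure (distr (joint_WU qW muU q) lborel fst) A = emeasure (joint_WU qW muU q) (A \<times> space muU)"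
    by (simp add: emeasure_distr)
  also have "\<dots> = (\<integral>\<^sup>+(w,u). ennreal (qW w * q w u) * indicator (A \<times> space muU) (w,u) \<partial>(lborel \<Otimes>\<^sub>M muU))"
    unfolding joint_WU_def by (subst emeasure_density) (auto simp: case_prod_unfold)
  also have "\<dots> = (\<integral>\<^sup>+w. \<integral>\<^sup>+u. ennreal (qW w * q w u) * indicator (A \<times> space muU) (w,u) \<partial>muU \<partial>lborel)"
    by (subst U.nn_integral_fst[symmetric]) (auto simp: case_prod_unfold)
  also have "\<dots> = (\<integral>\<^sup>+w. ennreal (qW w) * indicator A w \<partial>lborel)"
  proof (rule nn_integral_cong)
    fix w
    have "(\<integral>\<^sup>+u. ennreal (qW w * q w u) * indicator (A \<times> space muU) (w,u) \<partial>muU)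
        = (\<integral>\<^sup>+u. (ennreal (qW w) * indicator A w) * ennreal (q w u) \<partial>muU)"
      using qW q by (intro nn_integral_cong) (auto simp: is_density_def ennreal_mult indicator_def)
    also have "\<dots> = ennreal (qW w) * indicator A w"
      using q by (simp add: nn_integral_cmult is_density_def)
    finally show "(\<integral>\<^sup>+u. ennreal (qW w * q w u) * indicator (A \<times> space muU) (w,u) \<partial>muU)
        = ennreal (qW w) * indicator A w" .
  qed
  also have "\<dots> = emeasure (density lborel qW) A"
    by (simp add: emeasure_density)
  finally show "emeasure (distr (joint_WU qW muU q) lborel fst) A = emeasure (density lborel qW) A" .
qed simp

lemma prob_space_joint_WU:
  assumes "sigma_finite_measure muU" and qW: "is_density lborel qW"
    and "(\<lambda>(w,u). q w u) \<in> borel_measurable (lborel \<Otimes>\<^sub>M muU)"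
    and "\<forall>w. is_density muU (q w)"
  shows "prob_space (joint_WU qW muU q)"
proof
  have "emeasure (joint_WU qW muU q) (space (joint_WU qW muU q))
      = emeasure (distr (joint_WU qW muU q) lborel fst) UNIV"
    by (simp add: emeasure_distr space_pair_measure joint_WU_def)
  also have "\<dots> = 1"
    using qW by (simp add: distr_fst_joint_WU[OF assms] emeasure_density is_density_def)
  finally show "emeasure (joint_WU qW muU q) (space (joint_WU qW muU q)) = 1" .
qed

lemma nn_integral_joint_WU:
  assumes "sigma_finite_measure muU" and qW: "is_density lborel qW"
    and q_meas [measurable]: "(\<lambda>(w,u). q w u) \<in> borel_measurable (lborel \<Otimes>\<^sub>M muU)"
    and f_meas [measurable]: "f \<in> borel_measurable (lborel \<Otimes>\<^sub>M muU)"
  shows "(\<integral>\<^sup>+wu. f wu \<partial>joint_WU qW muU q)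
    = (\<integral>\<^sup>+u. \<integral>\<^sup>+w. ennreal (qW w * q w u) * f (w,u) \<partial>lborel \<partial>muU)"
proof -
  interpret pair_sigma_finite lborel muU
    using assms(1) by (simp add: pair_sigma_finite_def sigma_finite_lborel)
  have [measurable]: "qW \<in> borel_measurable borel" using qW by (simp add: is_density_def)
  have "(\<integral>\<^sup>+wu. f wu \<partial>joint_WU qW muU q)
      = (\<integral>\<^sup>+wu. ennreal (qW (fst wu) * q (fst wu) (snd wu)) * f wu \<partial>(lborel \<Otimes>\<^sub>M muU))"
    unfolding joint_WU_def by (subst nn_integral_density) (auto simp: case_prod_unfold)
  also have "\<dots> = (\<integral>\<^sup>+u. \<integral>\<^sup>+w. ennreal (qW w * q w u) * f (w,u) \<partial>lborel \<partial>muU)"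
    by (subst nn_integral_snd[symmetric]) (auto simp: case_prod_unfold)
  finally show ?thesis .
qed

lemma AE_joint_WU:
  assumes "(\<lambda>(w,u). q w u) \<in> borel_measurable (lborel \<Otimes>\<^sub>M muU)" and "is_density lborel qW"
  shows "AE wu in joint_WU qW muU q. 0 < qW (fst wu) * q (fst wu) (snd wu) \<and> snd wu \<in> space muU"
  unfolding joint_WU_def using assms
  by (subst AE_density) (auto simp: case_prod_unfold space_pair_measure is_density_def intro!: AE_I2)

section \<open>The variational bound\<close>

text \<open>Where the Jacobian vanishes the integrand is 0, by the convention x / 0 = 0.\<close>

lemma L2_integrand_weighted_le:
  assumes "0 \<le> qW w" "0 \<le> q w u" "0 \<le> p x (G w u)" "0 \<le> r (G w u) u" "0 \<le> c"
  shows "ennreal (qW w * q w u) * ennreal (c * L2_integrand p qW q r G x (w,u))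
    \<le> ennreal (\<bar>jacdet G w u\<bar> * (c * p x (G w u) * r (G w u) u))"
proof -
  have weighted: "qW w * q w u * L2_integrand p qW q r G x (w,u) \<le> \<bar>jacdet G w u\<bar> * (p x (G w u) * r (G w u) u)"
    using assms by (cases "qW w * q w u = 0 \<or> jacdet G w u = 0") (auto simp: L2_integrand_def field_simps)
  have "0 \<le> L2_integrand p qW q r G x (w,u)"
    using assms by (simp add: L2_integrand_def)
  with assms have "ennreal (qW w * q w u) * ennreal (c * L2_integrand p qW q r G x (w,u))
      = ennreal (c * (qW w * q w u * L2_integrand p qW q r G x (w,u)))"
    by (simp add: ennreal_mult'[symmetric] mult_ac)
  also have "\<dots> \<le> ennreal (\<bar>jacdet G w u\<bar> * (c * p x (G w u) * r (G w u) u))"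
    using mult_left_mono[OF weighted \<open>0 \<le> c\<close>] by (intro ennreal_leI) (simp add: mult_ac)
  finally show ?thesis .
qed

lemma borel_measurable_L2_integrand:
  fixes G :: "real^'d::finite \<Rightarrow> 'u \<Rightarrow> real^'d"
  assumes [measurable]: "p x \<in> borel_measurable borel" "qW \<in> borel_measurable borel"
    and [measurable]: "(\<lambda>(w,u). q w u) \<in> borel_measurable (lborel \<Otimes>\<^sub>M muU)"
    and r_meas: "(\<lambda>(z,u). r z u) \<in> borel_measurable (lborel \<Otimes>\<^sub>M muU)"
    and G_meas: "(\<lambda>(w,u). G w u) \<in> borel_measurable (lborel \<Otimes>\<^sub>M muU)"
    and G_diff: "\<forall>u\<in>space muU. \<forall>w. (\<lambda>v. G v u) differentiable (at w)"
  shows "L2_integrand p qW q r G x \<in> borel_measurable (lborel \<Otimes>\<^sub>M muU)"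
proof -
  have "(\<lambda>(w,u). det (matrix (frechet_derivative (\<lambda>v. G v u) (at w)))) \<in> borel_measurable (lborel \<Otimes>\<^sub>M muU)"
    using G_meas G_diff by (intro borel_measurable_det_partial_derivative) (auto simp: frechet_derivative_works)
  then have [measurable]: "(\<lambda>wu. jacdet G (fst wu) (snd wu)) \<in> borel_measurable (lborel \<Otimes>\<^sub>M muU)"
    by (simp add: jacdet_def case_prod_unfold)
  have [measurable]: "(\<lambda>wu. G (fst wu) (snd wu)) \<in> borel_measurable (lborel \<Otimes>\<^sub>M muU)"
    using G_meas by (simp add: case_prod_unfold)
  have [measurable]: "(\<lambda>wu. r (G (fst wu) (snd wu)) (snd wu)) \<in> borel_measurable (lborel \<Otimes>\<^sub>M muU)"
    using measurable_compose[OF _ r_meas, of "\<lambda>wu. (G (fst wu) (snd wu), snd wu)"] by simp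
  show ?thesis
    unfolding L2_integrand_def case_prod_unfold by measurable
qed

lemma nn_integral_integrate_out_density:
  assumes M: "sigma_finite_measure M"
    and r_meas: "(\<lambda>(z,u). r z u) \<in> borel_measurable (lborel \<Otimes>\<^sub>M M)" and r: "\<forall>z. is_density M (r z)"
    and c_meas: "c \<in> borel_measurable borel" and c_nonneg: "\<forall>z. 0 \<le> c z"
  shows "(\<integral>\<^sup>+u. \<integral>\<^sup>+z. ennreal (c z * r z u) \<partial>lborel \<partial>M) = (\<integral>\<^sup>+z. ennreal (c z) \<partial>lborel)"
proof -
  interpret M: sigma_finite_measure M by fact
  interpret pair_sigma_finite lborel M
    using M by (simp add: pair_sigma_finite_def sigma_finite_lborel)
  note [measurable] = r_meas c_meas
  have "(\<lambda>(z,u). ennreal (c z * r z u)) \<in> borel_measurable (lborel \<Otimes>\<^sub>M M)"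
    unfolding case_prod_unfold by measurable
  from nn_integral_snd[OF this] M.nn_integral_fst[OF this]
  have "(\<integral>\<^sup>+u. \<integral>\<^sup>+z. ennreal (c z * r z u) \<partial>lborel \<partial>M) = (\<integral>\<^sup>+z. \<integral>\<^sup>+u. ennreal (c z * r z u) \<partial>M \<partial>lborel)"
    by simp
  also have "\<dots> = (\<integral>\<^sup>+z. ennreal (c z) \<partial>lborel)"
  proof (rule nn_integral_cong)
    fix z
    have "(\<integral>\<^sup>+u. ennreal (c z * r z u) \<partial>M) = (\<integral>\<^sup>+u. ennreal (c z) * ennreal (r z u) \<partial>M)"
      using r c_nonneg by (intro nn_integral_cong) (simp add: ennreal_mult is_density_def)
    then show "(\<integral>\<^sup>+u. ennreal (c z * r z u) \<partial>M) = ennreal (c z)"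
      using r by (simp add: nn_integral_cmult is_density_def)
  qed
  finally show ?thesis .
qed

lemma nn_integral_joint_WU_L2_integrand_le:
  fixes k :: "real^'d::finite \<Rightarrow> real" and G :: "real^'d \<Rightarrow> 'u \<Rightarrow> real^'d"
  assumes muU: "sigma_finite_measure muU" and qW: "is_density lborel qW"
    and p_meas: "p x \<in> borel_measurable lborel" and p_nonneg: "\<forall>z. 0 \<le> p x z"
    and q_meas: "(\<lambda>(w,u). q w u) \<in> borel_measurable (lborel \<Otimes>\<^sub>M muU)" and q: "\<forall>w. is_density muU (q w)"
    and r_meas: "(\<lambda>(z,u). r z u) \<in> borel_measurable (lborel \<Otimes>\<^sub>M muU)" and r: "\<forall>z. is_density muU (r z)"
    and G_meas: "(\<lambda>(w,u). G w u) \<in> measurable (lborel \<Otimes>\<^sub>M muU) lborel"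
    and G_inj: "\<forall>u\<in>space muU. inj (\<lambda>w. G w u)"
    and G_diff: "\<forall>u\<in>space muU. \<forall>w. (\<lambda>v. G v u) differentiable (at w)"
    and k_meas: "k \<in> borel_measurable borel" and k_nonneg: "\<forall>z. 0 \<le> k z"
  shows "(\<integral>\<^sup>+wu. ennreal (k (case_prod G wu) * L2_integrand p qW q r G x wu) \<partial>joint_WU qW muU q)
    \<le> (\<integral>\<^sup>+z. ennreal (k z * p x z) \<partial>lborel)"
proof -
  have [measurable]: "qW \<in> borel_measurable borel" using qW by (simp add: is_density_def)
  note [measurable] = p_meas[simplified] q_meas r_meas k_meas
  have G_meas' [measurable]: "(\<lambda>(w,u). G w u) \<in> borel_measurable (lborel \<Otimes>\<^sub>M muU)"
    using G_meas by simp
  have [measurable]: "L2_integrand p qW q r G x \<in> borel_measurable (lborel \<Otimes>\<^sub>M muU)"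
    by (intro borel_measurable_L2_integrand[OF _ _ q_meas r_meas G_meas' G_diff]) measurable
  let ?K = "\<lambda>z u. k z * p x z * r z u"
  have "(\<integral>\<^sup>+wu. ennreal (k (case_prod G wu) * L2_integrand p qW q r G x wu) \<partial>joint_WU qW muU q)
    = (\<integral>\<^sup>+u. \<integral>\<^sup>+w. ennreal (qW w * q w u) * ennreal (k (G w u) * L2_integrand p qW q r G x (w,u)) \<partial>lborel \<partial>muU)"
    by (subst nn_integral_joint_WU[OF muU qW q_meas]) (simp_all add: case_prod_unfold)
  also have "\<dots> \<le> (\<integral>\<^sup>+u. \<integral>\<^sup>+w. ennreal (\<bar>jacdet G w u\<bar> * ?K (G w u) u) \<partial>lborel \<partial>muU)"
    using qW q r p_nonneg k_nonneg
    by (intro nn_integral_mono L2_integrand_weighted_le) (auto simp: is_density_def)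
  also have "\<dots> \<le> (\<integral>\<^sup>+u. \<integral>\<^sup>+z. ennreal (?K z u) \<partial>lborel \<partial>muU)"
    unfolding jacdet_def using G_inj G_diff p_nonneg k_nonneg r
    by (intro nn_integral_mono nn_integral_change_of_variables_le)
      (auto simp: frechet_derivative_works is_density_def)
  also have "\<dots> = (\<integral>\<^sup>+z. ennreal (k z * p x z) \<partial>lborel)"
    using muU r_meas r k_nonneg p_nonneg by (intro nn_integral_integrate_out_density) auto
  finally show ?thesis .
qed

lemma KL_qZ_le_ln_marginal_minus_L2:
  fixes G :: "real^'d::finite \<Rightarrow> 'u \<Rightarrow> real^'d"
  assumes muU: "sigma_finite_measure muU" and qW: "is_density lborel qW"
    and p_meas: "p x \<in> borel_measurable lborel" and p_nonneg: "\<forall>z. 0 \<le> p x z"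
    and p_marg_pos: "marginal p x > 0"
    and q_meas: "(\<lambda>(w,u). q w u) \<in> borel_measurable (lborel \<Otimes>\<^sub>M muU)" and q: "\<forall>w. is_density muU (q w)"
    and r_meas: "(\<lambda>(z,u). r z u) \<in> borel_measurable (lborel \<Otimes>\<^sub>M muU)" and r: "\<forall>z. is_density muU (r z)"
    and G_meas: "(\<lambda>(w,u). G w u) \<in> measurable (lborel \<Otimes>\<^sub>M muU) lborel"
    and G_bij: "\<forall>u\<in>space muU. bij (\<lambda>w. G w u)"
    and G_diff: "\<forall>u\<in>space muU. \<forall>w. (\<lambda>v. G v u) differentiable (at w)"
    and L2_pos: "AE wu in joint_WU qW muU q. 0 < L2_integrand p qW q r G x wu"
    and L2_int: "integrable (joint_WU qW muU q) (\<lambda>wu. ln (L2_integrand p qW q r G x wu))"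
    and ac: "absolutely_continuous (posterior_measure p x) (qZ qW muU q G)"
    and KL_int: "integrable (qZ qW muU q G) (entropy_density (exp 1) (posterior_measure p x) (qZ qW muU q G))"
  shows "KL (qZ qW muU q G) (posterior_measure p x) \<le> ln (marginal p x) - L2 p qW muU q r G x"
proof -
  define J where "J = joint_WU qW muU q"
  define Q where "Q = qZ qW muU q G"
  define h where "h = RN_deriv (posterior_measure p x) Q"
  define m where "m = marginal p x"
  define A where "A = (\<lambda>wu. ln (enn2real (h (case_prod G wu))))"
  define B where "B = (\<lambda>wu. ln (L2_integrand p qW q r G x wu))"
  interpret J: prob_space J
    unfolding J_def using muU qW q_meas q by (rule prob_space_joint_WU)
  have G_meas_J: "case_prod G \<in> measurable J lborel"
    using G_meas by (simp add: J_def measurable_cong_sets[OF sets_joint_WU refl])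
  have Q_eq: "Q = distr J lborel (case_prod G)"
    by (simp add: Q_def qZ_def J_def)
  have "prob_space Q" "sets Q = sets borel"
    unfolding Q_eq using J.prob_space_distr[OF G_meas_J] by simp_all
  note h = posterior_RN_deriv[OF p_meas p_nonneg p_marg_pos this ac[folded Q_def], folded h_def]
  note KL = KL_distr_eq_integral[OF G_meas_J sets_posterior_measure[of p x], folded Q_eq, folded h_def]
  note [measurable] = h(1)
  have A_int: "integrable J A"
    using KL(2) KL_int[folded Q_def] by (simp add: A_def)
  have B_int: "integrable J B"
    using L2_int by (simp add: B_def J_def)
  have "AE wu in J. 0 < h (case_prod G wu) \<and> h (case_prod G wu) < \<infinity>"
    using h(3) unfolding Q_eq by (rule AE_distrD[OF G_meas_J])
  with L2_pos have "AE wu in J. exp (A wu + B wu - ln m)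
      = enn2real (h (case_prod G wu)) / m * L2_integrand p qW q r G x wu"
    unfolding J_def[symmetric]
    by eventually_elim (auto simp: A_def B_def m_def exp_add exp_diff p_marg_pos enn2real_positive_iff)
  then have "(\<integral>\<^sup>+wu. ennreal (exp (A wu + B wu - ln m)) \<partial>J)
      = (\<integral>\<^sup>+wu. ennreal (enn2real (h (case_prod G wu)) / m * L2_integrand p qW q r G x wu) \<partial>J)"
    by (intro nn_integral_cong_AE) auto
  also have "\<dots> \<le> (\<integral>\<^sup>+z. ennreal (enn2real (h z) / m * p x z) \<partial>lborel)"
    unfolding J_def using muU qW p_meas p_nonneg q_meas q r_meas r G_meas G_bij G_diff p_marg_pos
    by (intro nn_integral_joint_WU_L2_integrand_le) (auto simp: bij_is_inj m_def intro: borel_measurable_divide)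
  also have "\<dots> = 1"
    using h(4) by (simp add: m_def mult_ac)
  finally have "(\<integral>wu. A wu + B wu - ln m \<partial>J) \<le> 0"
    using A_int B_int by (intro J.integral_nonpos_if_nn_integral_exp_le_1) auto
  moreover have "(\<integral>wu. A wu + B wu - ln m \<partial>J) = (\<integral>wu. A wu \<partial>J) + (\<integral>wu. B wu \<partial>J) - ln m"
    using A_int B_int by (simp add: J.prob_space)
  ultimately show ?thesis
    using KL(1) by (simp add: Q_def m_def A_def B_def L2_def J_def)
qed

section \<open>The trivial flow\<close>

lemma L2_integrand_trivial_flow:
  assumes G_g: "(\<lambda>v. G v u) = g" and q: "q w u = c" and r: "r (g w) u = c"
    and pos: "0 < qW w * c" "0 < m"
    and qW_eq: "qW w = \<bar>det (matrix (frechet_derivative g (at w)))\<bar> * (p x (g w) / m * e)"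
  shows "L2_integrand p qW q r G x (w,u) = m / e" and "e \<noteq> 0"
proof -
  have "qW w \<noteq> 0" "c \<noteq> 0"
    using pos(1) by auto
  with qW_eq have "det (matrix (frechet_derivative g (at w))) \<noteq> 0" and e: "e \<noteq> 0"
    by auto
  from e show "e \<noteq> 0" .
  have "G w u = g w"
    using G_g by (auto dest: fun_cong)
  with \<open>det _ \<noteq> 0\<close> \<open>qW w \<noteq> 0\<close> \<open>c \<noteq> 0\<close> e pos(2) show "L2_integrand p qW q r G x (w,u) = m / e"
    by (simp add: L2_integrand_def jacdet_def G_g q r qW_eq field_simps)
qed

lemma trivial_flow_has_derivative:
  assumes "is_density muU rho" and G_g: "\<forall>u\<in>space muU. \<forall>w. G w u = g w"
    and G_diff: "\<forall>u\<in>space muU. \<forall>w. (\<lambda>v. G v u) differentiable (at w)"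
  shows "(g has_derivative frechet_derivative g (at w)) (at w)"
proof -
  obtain u where u: "u \<in> space muU"
    using assms(1) by (cases "space muU = {}") (auto simp: is_density_def nn_integral_empty)
  moreover have "(\<lambda>v. G v u) = g"
    using G_g u by auto
  ultimately show ?thesis
    using G_diff unfolding frechet_derivative_works[symmetric] by metis
qed

lemma AE_eq_Jacobian_mult_posterior_RN_deriv:
  fixes g :: "real^'d::finite \<Rightarrow> real^'d"
  assumes qW: "is_density lborel qW"
    and p_meas: "p x \<in> borel_measurable lborel" and p_nonneg: "\<forall>z. 0 \<le> p x z"
    and p_marg_pos: "marginal p x > 0"
    and g_bij: "bij g" and der: "\<And>w. (g has_derivative g' w) (at w)"
    and ac: "absolutely_continuous (posterior_measure p x) (distr (density lborel qW) lborel g)"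
  defines "h \<equiv> RN_deriv (posterior_measure p x) (distr (density lborel qW) lborel g)"
  shows "AE w in lborel. qW w = \<bar>det (matrix (g' w))\<bar> * (p x (g w) / marginal p x * enn2real (h (g w)))"
proof -
  have qW_meas [measurable]: "qW \<in> borel_measurable borel" and qW_nonneg: "\<And>w. 0 \<le> qW w"
    using qW by (simp_all add: is_density_def)
  have [measurable]: "p x \<in> borel_measurable borel"
    using p_meas by simp
  have "prob_space (density lborel qW)"
    using qW by (intro prob_spaceI) (simp add: emeasure_density is_density_def)
  then have "prob_space (distr (density lborel qW) lborel g)" "sets (distr (density lborel qW) lborel g) = sets borel"
    using borel_measurable_has_derivative[OF der] by (auto intro: prob_space.prob_space_distr)
  note h = posterior_RN_deriv[OF p_meas p_nonneg p_marg_pos this ac, folded h_def]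
  note [measurable] = h(1)
  show ?thesis
  proof (rule AE_eq_Jacobian_mult_of_distr_density[OF g_bij der qW_meas qW_nonneg])
    show "(\<lambda>z. p x z / marginal p x * enn2real (h z)) \<in> borel_measurable borel"
      by measurable
    show "distr (density lborel qW) borel g = density lborel (\<lambda>z. p x z / marginal p x * enn2real (h z))"
      using h(2) by (simp cong: distr_cong)
  qed (use p_nonneg p_marg_pos in simp)
qed

lemma KL_pushforward_eq_ln_marginal_minus_L2:
  fixes G :: "real^'d::finite \<Rightarrow> 'u \<Rightarrow> real^'d" and g :: "real^'d \<Rightarrow> real^'d"
  assumes muU: "sigma_finite_measure muU" and qW: "is_density lborel qW"
    and p_meas: "p x \<in> borel_measurable lborel" and p_nonneg: "\<forall>z. 0 \<le> p x z"
    and p_marg_pos: "marginal p x > 0"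
    and q_meas: "(\<lambda>(w,u). q w u) \<in> borel_measurable (lborel \<Otimes>\<^sub>M muU)" and q: "\<forall>w. is_density muU (q w)"
    and G_diff: "\<forall>u\<in>space muU. \<forall>w. (\<lambda>v. G v u) differentiable (at w)"
    and g_bij: "bij g" and G_g: "\<forall>u\<in>space muU. \<forall>w. G w u = g w"
    and rho: "is_density muU rho"
    and q_rho: "\<forall>w. \<forall>u\<in>space muU. q w u = rho u"
    and r_rho: "\<forall>z. \<forall>u\<in>space muU. r z u = rho u"
    and L2_pos: "AE wu in joint_WU qW muU q. 0 < L2_integrand p qW q r G x wu"
    and L2_int: "integrable (joint_WU qW muU q) (\<lambda>wu. ln (L2_integrand p qW q r G x wu))"
    and ac: "absolutely_continuous (posterior_measure p x) (distr (density lborel qW) lborel g)"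
  shows "KL (distr (density lborel qW) lborel g) (posterior_measure p x) = ln (marginal p x) - L2 p qW muU q r G x"
proof -
  define J where "J = joint_WU qW muU q"
  define \<nu> where "\<nu> = distr (density lborel qW) lborel g"
  define h where "h = RN_deriv (posterior_measure p x) \<nu>"
  define m where "m = marginal p x"
  interpret J: prob_space J
    unfolding J_def using muU qW q_meas q by (rule prob_space_joint_WU)
  note der = trivial_flow_has_derivative[OF rho G_g G_diff]
  have fst_meas: "fst \<in> measurable J lborel"
    by (simp add: J_def measurable_cong_sets[OF sets_joint_WU refl])
  have J_fst: "distr J lborel fst = density lborel qW"
    unfolding J_def using muU qW q_meas q by (rule distr_fst_joint_WU)
  have g_fst_meas: "g \<circ> fst \<in> measurable J lborel"
    by (rule measurable_comp[OF fst_meas]) (simp add: borel_measurable_has_derivative[OF der])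
  have \<nu>_eq: "\<nu> = distr J lborel (g \<circ> fst)"
    unfolding \<nu>_def J_fst[symmetric]
    by (rule distr_distr) (simp_all add: fst_meas[simplified] borel_measurable_has_derivative[OF der])
  note KL = KL_distr_eq_integral[OF g_fst_meas sets_posterior_measure[of p x], folded \<nu>_eq, folded h_def]
  have [measurable]: "h \<in> borel_measurable borel"
    unfolding h_def by (rule borel_measurable_RN_deriv_borel[OF sets_posterior_measure])
  note [measurable] = borel_measurable_has_derivative[OF der]
  have "AE w in density lborel qW. qW w = \<bar>det (matrix (frechet_derivative g (at w)))\<bar> * (p x (g w) / m * enn2real (h (g w)))"
    using AE_eq_Jacobian_mult_posterior_RN_deriv[OF qW p_meas p_nonneg p_marg_pos g_bij der ac] qW
    by (subst AE_density) (auto simp: h_def \<nu>_def m_def is_density_def elim: eventually_mono)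
  then have "AE wu in J. qW (fst wu)
      = \<bar>det (matrix (frechet_derivative g (at (fst wu))))\<bar> * (p x (g (fst wu)) / m * enn2real (h (g (fst wu))))"
    unfolding J_fst[symmetric] by (rule AE_distrD[OF fst_meas])
  with AE_joint_WU[OF q_meas qW] L2_pos
  have "AE wu in J. ln (enn2real (h (g (fst wu)))) = ln m - ln (L2_integrand p qW q r G x wu)"
    unfolding J_def[symmetric]
  proof eventually_elim
    case (elim wu)
    obtain w u where wu: "wu = (w, u)" by (cases wu)
    from elim have u: "u \<in> space muU"
      and qW_eq: "qW w = \<bar>det (matrix (frechet_derivative g (at w)))\<bar> * (p x (g w) / m * enn2real (h (g w)))"
      by (simp_all add: wu)
    from elim u q_rho have pos: "0 < qW w * rho u"
      by (simp add: wu)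
    have "(\<lambda>v. G v u) = g" "q w u = rho u" "r (g w) u = rho u"
      using u G_g q_rho r_rho by auto
    note L2_eq = L2_integrand_trivial_flow[where G=G and u=u and q=q and w=w and r=r and qW=qW and p=p and x=x,
        OF this pos p_marg_pos[folded m_def] qW_eq]
    then show ?case
      using p_marg_pos by (simp add: wu ln_div m_def less_le)
  qed
  then have "(\<integral>wu. ln (enn2real (h (g (fst wu)))) \<partial>J) = (\<integral>wu. ln m - ln (L2_integrand p qW q r G x wu) \<partial>J)"
    using L2_int fst_meas by (intro integral_cong_AE) (auto simp: J_def)
  then show ?thesis
    using KL(1) fst_meas L2_int by (simp add: J.prob_space L2_def \<nu>_def m_def flip: J_def)
qed

theorem proposition1:
  fixes p :: "'x \<Rightarrow> real^'d \<Rightarrow> real"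
    and qW :: "real^'d \<Rightarrow> real"
    and muU :: "'u measure"
    and Phi :: "'phi set"
    and qUW rUZ :: "'phi \<Rightarrow> real^'d \<Rightarrow> 'u \<Rightarrow> real"
    and G :: "'phi \<Rightarrow> real^'d \<Rightarrow> 'u \<Rightarrow> real^'d"
    and psi phi :: 'phi
    and g :: "real^'d \<Rightarrow> real^'d"
    and rho :: "'u \<Rightarrow> real"
    and x :: 'x
  assumes muU: "sigma_finite_measure muU"
    and qW: "is_density lborel qW"
    and p_meas: "p x \<in> borel_measurable lborel"
    and p_nonneg: "\<forall>z. 0 \<le> p x z"
    and p_int: "integrable lborel (p x)"
    and p_marg_pos: "marginal p x > 0"
    and qUW_meas: "\<forall>f\<in>Phi. (\<lambda>(w,u). qUW f w u) \<in> borel_measurable (lborel \<Otimes>\<^sub>M muU)"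
    and qUW_dens: "\<forall>f\<in>Phi. \<forall>w. is_density muU (qUW f w)"
    and rUZ_meas: "\<forall>f\<in>Phi. (\<lambda>(z,u). rUZ f z u) \<in> borel_measurable (lborel \<Otimes>\<^sub>M muU)"
    and rUZ_dens: "\<forall>f\<in>Phi. \<forall>z. is_density muU (rUZ f z)"
    and G_meas: "\<forall>f\<in>Phi. (\<lambda>(w,u). G f w u) \<in> measurable (lborel \<Otimes>\<^sub>M muU) lborel"
    and G_bij: "\<forall>f\<in>Phi. \<forall>u\<in>space muU. bij (\<lambda>w. G f w u)"
    and G_diff: "\<forall>f\<in>Phi. \<forall>u\<in>space muU. \<forall>w. (\<lambda>v. G f v u) differentiable (at w)"
    and psi: "psi \<in> Phi"
    and g_bij: "bij g"
    and G_psi: "\<forall>u\<in>space muU. \<forall>w. G psi w u = g w"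
    and rho: "is_density muU rho"
    and qUW_psi: "\<forall>w. \<forall>u\<in>space muU. qUW psi w u = rho u"
    and rUZ_psi: "\<forall>z. \<forall>u\<in>space muU. rUZ psi z u = rho u"
    and phi: "phi \<in> Phi"
    and wd_L2_pos: "\<forall>f\<in>{phi, psi}. AE wu in joint_WU qW muU (qUW f).
                       0 < L2_integrand p qW (qUW f) (rUZ f) (G f) x wu"
    and wd_L2_int: "\<forall>f\<in>{phi, psi}. integrable (joint_WU qW muU (qUW f))
                       (\<lambda>wu. ln (L2_integrand p qW (qUW f) (rUZ f) (G f) x wu))"
    and wd_KL_phi_ac: "absolutely_continuous (posterior_measure p x) (qZ qW muU (qUW phi) (G phi))"
    and wd_KL_phi_int: "integrable (qZ qW muU (qUW phi) (G phi))
          (entropy_density (exp 1) (posterior_measure p x) (qZ qW muU (qUW phi) (G phi)))"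
    and wd_KL_g_ac: "absolutely_continuous (posterior_measure p x) (distr (density lborel qW) lborel g)"
    and wd_KL_g_int: "integrable (distr (density lborel qW) lborel g)
          (entropy_density (exp 1) (posterior_measure p x) (distr (density lborel qW) lborel g))"
    and hyp: "L2 p qW muU (qUW phi) (rUZ phi) (G phi) x \<ge> L2 p qW muU (qUW psi) (rUZ psi) (G psi) x"
  shows "KL (qZ qW muU (qUW phi) (G phi)) (posterior_measure p x)
           \<le> KL (distr (density lborel qW) lborel g) (posterior_measure p x)"
proof -
  have phi_in: "phi \<in> {phi, psi}" and psi_in: "psi \<in> {phi, psi}" by simp_all
  have "KL (qZ qW muU (qUW phi) (G phi)) (posterior_measure p x)
      \<le> ln (marginal p x) - L2 p qW muU (qUW phi) (rUZ phi) (G phi) x"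
    using bspec[OF qUW_meas phi] bspec[OF qUW_dens phi] bspec[OF rUZ_meas phi] bspec[OF rUZ_dens phi]
      bspec[OF G_meas phi] bspec[OF G_bij phi] bspec[OF G_diff phi]
      bspec[OF wd_L2_pos phi_in] bspec[OF wd_L2_int phi_in]
    by (intro KL_qZ_le_ln_marginal_minus_L2 muU qW p_meas p_nonneg p_marg_pos wd_KL_phi_ac wd_KL_phi_int)
  moreover have "KL (distr (density lborel qW) lborel g) (posterior_measure p x)
      = ln (marginal p x) - L2 p qW muU (qUW psi) (rUZ psi) (G psi) x"
    using bspec[OF qUW_meas psi] bspec[OF qUW_dens psi] bspec[OF G_diff psi]
      bspec[OF wd_L2_pos psi_in] bspec[OF wd_L2_int psi_in]
    by (intro KL_pushforward_eq_ln_marginal_minus_L2[OF muU qW p_meas p_nonneg p_marg_pos _ _ _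
        g_bij G_psi rho qUW_psi rUZ_psi _ _ wd_KL_g_ac])
  ultimately show ?thesis
    using hyp by linarith
qed

end
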